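(* Let $f\in\mathcal X_M'$ satisfy $f(0)=1$ and $\mathcal D_f\ne\{0\}$. Then for every $k\in\mathbb N$ the set $A_k(f)$ is $\tau_{AW}$-open in $\mathcal X_M'$, contains $f$, and is convex (if $g,h\in A_k(f)$ and $a\in[0,1]$ then $ag+(1-a)h\in A_k(f)$); moreover $\{A_k(f)\}_{k\in\mathbb N}$ is a local base for $\tau_{AW}$ at $f$ (indeed $A_{2k}(f)\subset V_k(f)$).
   Context: For $f:\mathbb R\to[-\infty,\infty]$, $\mathrm{epi}(f)=\{(\theta,b):b\ge f(\theta)\}$, $\mathcal D_f=\{\theta:f(\theta)<\infty\}$. On $\mathbb R^2$ use the box metric $d(x,y)=\max(|x_1-y_1|,|x_2-y_2|)$, $d(x,A)=\inf_{y\in A}d(x,y)$, $B_r=\{x:d(0,x)<r\}$, $\overline B_r=\{x:d(0,x)\le r\}$. $\mathcal X_M'$ is the set of lower semicontinuous convex $f:\mathbb R\to[0,\infty]$ with $f(0)<\infty$, with the Attouch–Wets topology $\tau_{AW}$, whose local base at $f$ is $V_k(f)=\{g\in\mathcal X_M':\sup_{x\in\overline B_k}|d(x,\mathrm{epi}(g))-d(x,\mathrm{epi}(f))|<1/k\}$, $k\in\mathbb N$. For $f\in\mathcal X_M'$ with $f(0)=1$, $\mathcal D_f\ne\{0\}$ and $k\in\mathbb N$: let $\eta_{l}=\inf\{\theta:(\theta,f(\theta))\in B_{2k+2}\}$, $\eta_{r}=\sup\{\theta:(\theta,f(\theta))\in B_{2k+2}\}$; fix $0<\epsilon<(\eta_r-\eta_l)/2$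 such that $d((a,f(a)),(b,f(b)))<1/(2k)$ for all $a,b\in[\eta_l,\eta_l+\epsilon]$ and for all $a,b\in[\eta_r-\epsilon,\eta_r]$; define $f^\sharp_k(\theta)=f(\theta)+1/(2k)$ for $\theta\in[\eta_l+\epsilon,\eta_r-\epsilon]$ and $f^\sharp_k(\theta)=+\infty$ otherwise. For $g$ let $\theta_{g,l}=\inf\mathcal D_g$, $\theta_{g,r}=\sup\mathcal D_g$; write $h\lll g$ if $\theta_{h,l}<\theta_{g,l}$, $\theta_{g,r}<\theta_{h,r}$ and $h(\theta)<g(\theta)$ for all $\theta\in[\theta_{g,l},\theta_{g,r}]$. Let $W(g)=\{h\in\mathcal X_M':h\lll g\}$ and $A_k(f)=V_k(f^\sharp_k)\cap W(f^\sharp_k)$. *)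

theory Defs
  imports "HOL-Analysis.Analysis"
begin

definition epi :: "(real \<Rightarrow> ereal) \<Rightarrow> (real \<times> real) set" where
  "epi f = {(\<theta>, b). ereal b \<ge> f \<theta>}"

definition dom_f :: "(real \<Rightarrow> ereal) \<Rightarrow> real set" where
  "dom_f f = {\<theta>. f \<theta> < \<infinity>}"

definition bdist :: "real \<times> real \<Rightarrow> real \<times> real \<Rightarrow> real" where
  "bdist x y = max \<bar>fst x - fst y\<bar> \<bar>snd x - snd y\<bar>"

definition bsetdist :: "real \<times> real \<Rightarrow> (real \<times> real) set \<Rightarrow> real" where
  "bsetdist x A = (INF y\<in>A. bdist x y)"

definition bball :: "real \<Rightarrow> (real \<times> real) set" where
  "bball r = {x. bdist (0,0) x < r}"

definition bcball :: "real \<Rightarrow> (real \<times> real) set" where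
  "bcball r = {x. bdist (0,0) x \<le> r}"

definition lsc :: "(real \<Rightarrow> ereal) \<Rightarrow> bool" where
  "lsc f \<longleftrightarrow> (\<forall>x. f x \<le> Liminf (at x) f)"

definition convex_fun :: "(real \<Rightarrow> ereal) \<Rightarrow> bool" where
  "convex_fun f \<longleftrightarrow> (\<forall>x y a. 0 < a \<and> a < 1 \<longrightarrow>
      f (a * x + (1 - a) * y) \<le> ereal a * f x + ereal (1 - a) * f y)"

definition XM :: "(real \<Rightarrow> ereal) set" where
  "XM = {f. lsc f \<and> convex_fun f \<and> (\<forall>\<theta>. f \<theta> \<ge> 0) \<and> f 0 < \<infinity>}"

definition Vk :: "nat \<Rightarrow> (real \<Rightarrow> ereal) \<Rightarrow> (real \<Rightarrow> ereal) set" where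
  "Vk k f = {g\<in>XM. (SUP x\<in>bcball (real k).
        \<bar>bsetdist x (epi g) - bsetdist x (epi f)\<bar>) < 1 / real k}"

definition aw_open :: "(real \<Rightarrow> ereal) set \<Rightarrow> bool" where
  "aw_open U \<longleftrightarrow> U \<subseteq> XM \<and> (\<forall>f\<in>U. \<exists>k\<ge>1. Vk k f \<subseteq> U)"

definition graph_pts :: "(real \<Rightarrow> ereal) \<Rightarrow> nat \<Rightarrow> real set" where
  "graph_pts f k = {\<theta>. f \<theta> < \<infinity> \<and>
      (\<theta>, real_of_ereal (f \<theta>)) \<in> bball (2 * real k + 2)}"

definition eta_l :: "(real \<Rightarrow> ereal) \<Rightarrow> nat \<Rightarrow> real" where
  "eta_l f k = Inf (graph_pts f k)"

definition eta_r :: "(real \<Rightarrow> ereal) \<Rightarrow> nat \<Rightarrow> real" where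
  "eta_r f k = Sup (graph_pts f k)"

definition eps_ok :: "(real \<Rightarrow> ereal) \<Rightarrow> nat \<Rightarrow> real \<Rightarrow> bool" where
  "eps_ok f k \<epsilon> \<longleftrightarrow> 0 < \<epsilon> \<and> \<epsilon> < (eta_r f k - eta_l f k) / 2 \<and>
     (\<forall>a\<in>{eta_l f k .. eta_l f k + \<epsilon>}. \<forall>b\<in>{eta_l f k .. eta_l f k + \<epsilon>}.
        f a < \<infinity> \<and> f b < \<infinity> \<and>
        bdist (a, real_of_ereal (f a)) (b, real_of_ereal (f b)) < 1 / (2 * real k)) \<and>
     (\<forall>a\<in>{eta_r f k - \<epsilon> .. eta_r f k}. \<forall>b\<in>{eta_r f k - \<epsilon> .. eta_r f k}.
        f a < \<infinity> \<and> f b < \<infinity> \<and>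
        bdist (a, real_of_ereal (f a)) (b, real_of_ereal (f b)) < 1 / (2 * real k))"

definition fsharp :: "(real \<Rightarrow> ereal) \<Rightarrow> nat \<Rightarrow> real \<Rightarrow> real \<Rightarrow> ereal" where
  "fsharp f k \<epsilon> \<theta> = (if \<theta> \<in> {eta_l f k + \<epsilon> .. eta_r f k - \<epsilon>}
      then f \<theta> + ereal (1 / (2 * real k)) else \<infinity>)"

definition theta_l :: "(real \<Rightarrow> ereal) \<Rightarrow> ereal" where
  "theta_l g = Inf (ereal ` dom_f g)"

definition theta_r :: "(real \<Rightarrow> ereal) \<Rightarrow> ereal" where
  "theta_r g = Sup (ereal ` dom_f g)"

definition below :: "(real \<Rightarrow> ereal) \<Rightarrow> (real \<Rightarrow> ereal) \<Rightarrow> bool" where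
  "below h g \<longleftrightarrow> theta_l h < theta_l g \<and> theta_r g < theta_r h \<and>
     (\<forall>\<theta>. theta_l g \<le> ereal \<theta> \<and> ereal \<theta> \<le> theta_r g \<longrightarrow> h \<theta> < g \<theta>)"

definition W :: "(real \<Rightarrow> ereal) \<Rightarrow> (real \<Rightarrow> ereal) set" where
  "W g = {h\<in>XM. below h g}"

definition Ak :: "nat \<Rightarrow> real \<Rightarrow> (real \<Rightarrow> ereal) \<Rightarrow> (real \<Rightarrow> ereal) set" where
  "Ak k \<epsilon> f = Vk k (fsharp f k \<epsilon>) \<inter> W (fsharp f k \<epsilon>)"

end

theory Submission
  imports Defs
begin

text \<open>The function \<phi> = fsharp f k \<epsilon> lies strictly above f on its domain [eta_l + \<epsilon>, eta_r - \<epsilon>],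
  and each point of epi f in the box of radius 2k + 1 is within 1/(2k) + o of epi \<phi>, where
  o < 1/(2k) is the oscillation of f on the two end intervals of length \<epsilon>. Hence f lies in A_k(f),
  and the triangle inequality for the Attouch-Wets deviation gives A_2k(f) \<subseteq> V_k(f).
  W(\<phi>) is open: if g \<lll> \<phi>, then g stays below \<phi> by a uniform gap on a neighbourhood of the domain
  of \<phi>, so a function h close to g has epigraph points below \<phi> \<theta> on both sides of each \<theta> in that
  domain, and h \<theta> < \<phi> \<theta> by convexity. A_k(f) is convex because the epigraph of a convex
  combination of g and h lies between epi \<phi> and epi g \<union> epi h.\<close>

section \<open>Box distance and the Attouch-Wets deviation\<close>

lemma bdist_nonneg: "0 \<le> bdist x y"
  by (simp add: bdist_def)

lemma bdist_Pair: "bdist (a, b) (c, d) = max \<bar>a - c\<bar> \<bar>b - d\<bar>"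
  by (simp add: bdist_def)

lemma bdist_commute: "bdist x y = bdist y x"
  by (simp add: bdist_def abs_minus_commute)

lemma bdist_triangle: "bdist x y \<le> bdist x z + bdist z y"
  unfolding bdist_def by (auto simp: max_def abs_if split: if_splits)

lemma bcball_iff: "x \<in> bcball r \<longleftrightarrow> \<bar>fst x\<bar> \<le> r \<and> \<bar>snd x\<bar> \<le> r"
  by (simp add: bcball_def bdist_def)

lemma bcball_mono: "r \<le> r' \<Longrightarrow> bcball r \<subseteq> bcball r'"
  by (auto simp: bcball_def)

lemma bsetdist_nonneg: "A \<noteq> {} \<Longrightarrow> 0 \<le> bsetdist x A"
  unfolding bsetdist_def by (rule cINF_greatest) (auto simp: bdist_nonneg)

lemma bsetdist_le_bdist: "y \<in> A \<Longrightarrow> bsetdist x A \<le> bdist x y"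
  unfolding bsetdist_def by (rule cINF_lower) (auto intro: bdd_belowI[of _ 0] simp: bdist_nonneg)

lemma bsetdist_greatest: "A \<noteq> {} \<Longrightarrow> (\<And>y. y \<in> A \<Longrightarrow> c \<le> bdist x y) \<Longrightarrow> c \<le> bsetdist x A"
  unfolding bsetdist_def by (rule cINF_greatest) auto

lemma bsetdist_lessE:
  assumes "A \<noteq> {}" "bsetdist x A < r"
  obtains y where "y \<in> A" "bdist x y < r"
  using assms cInf_lessD[of "(\<lambda>y. bdist x y) ` A" r] unfolding bsetdist_def by auto

lemma bsetdist_mono: "A \<noteq> {} \<Longrightarrow> A \<subseteq> B \<Longrightarrow> bsetdist x B \<le> bsetdist x A"
  by (rule bsetdist_greatest) (auto intro: bsetdist_le_bdist)

lemma bsetdist_eq_0: "x \<in> A \<Longrightarrow> bsetdist x A = 0"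
  using bsetdist_le_bdist[of x A x] bsetdist_nonneg[of A x] by (auto simp: bdist_def)

definition aw_dev :: "real \<Rightarrow> (real \<times> real) set \<Rightarrow> (real \<times> real) set \<Rightarrow> real" where
  "aw_dev r A B = (SUP x\<in>bcball r. \<bar>bsetdist x A - bsetdist x B\<bar>)"

lemma Vk_iff: "g \<in> Vk k f \<longleftrightarrow> g \<in> XM \<and> aw_dev (real k) (epi g) (epi f) < 1 / real k"
  by (simp add: Vk_def aw_dev_def)

lemma aw_dev_commute: "aw_dev r A B = aw_dev r B A"
  by (simp add: aw_dev_def abs_minus_commute)

lemma bdd_above_bsetdist_diff:
  assumes "A \<noteq> {}" "B \<noteq> {}"
  shows "bdd_above ((\<lambda>x. \<bar>bsetdist x A - bsetdist x B\<bar>) ` bcball r)"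
proof -
  obtain p q where pq: "p \<in> A" "q \<in> B" using assms by auto
  show ?thesis
  proof (rule bdd_aboveI2)
    fix x assume "x \<in> bcball r"
    then have x: "bdist x (0, 0) \<le> r" by (simp add: bcball_def bdist_commute)
    have "\<bar>bsetdist x A - bsetdist x B\<bar> \<le> bdist x p + bdist x q"
      using bsetdist_nonneg[OF assms(1), of x] bsetdist_nonneg[OF assms(2), of x]
        bsetdist_le_bdist[OF pq(1), of x] bsetdist_le_bdist[OF pq(2), of x] by linarith
    also have "\<dots> \<le> 2 * r + bdist (0, 0) p + bdist (0, 0) q"
      using bdist_triangle[of x p "(0, 0)"] bdist_triangle[of x q "(0, 0)"] x by linarith
    finally show "\<bar>bsetdist x A - bsetdist x B\<bar> \<le> 2 * r + bdist (0, 0) p + bdist (0, 0) q" .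
  qed
qed

lemma aw_dev_upper:
  "A \<noteq> {} \<Longrightarrow> B \<noteq> {} \<Longrightarrow> x \<in> bcball r \<Longrightarrow> \<bar>bsetdist x A - bsetdist x B\<bar> \<le> aw_dev r A B"
  unfolding aw_dev_def by (rule cSUP_upper) (use bdd_above_bsetdist_diff in auto)

lemma aw_dev_least:
  assumes "0 \<le> r" "\<And>x. x \<in> bcball r \<Longrightarrow> \<bar>bsetdist x A - bsetdist x B\<bar> \<le> c"
  shows "aw_dev r A B \<le> c"
proof -
  have "(0, 0) \<in> bcball r" using assms(1) by (simp add: bcball_def bdist_def)
  then show ?thesis unfolding aw_dev_def by (intro cSUP_least) (use assms in auto)
qed

lemma aw_dev_triangle:
  assumes "A \<noteq> {}" "B \<noteq> {}" "C \<noteq> {}" "0 \<le> r" "r \<le> r1" "r \<le> r2"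
  shows "aw_dev r A C \<le> aw_dev r1 A B + aw_dev r2 B C"
proof (rule aw_dev_least[OF \<open>0 \<le> r\<close>])
  fix x assume "x \<in> bcball r"
  then have "x \<in> bcball r1" "x \<in> bcball r2" using assms bcball_mono by blast+
  then show "\<bar>bsetdist x A - bsetdist x C\<bar> \<le> aw_dev r1 A B + aw_dev r2 B C"
    using aw_dev_upper[of A B x r1] aw_dev_upper[of B C x r2] assms by linarith
qed

text \<open>Points of E at distance more than r + 1 from x never realise the distance from x to E,
  because p is closer; so only the cover of E near the origin matters.\<close>
lemma aw_dev_le_of_cover:
  assumes "F \<subseteq> E" and "F \<noteq> {}" and p: "p \<in> E" "bdist (0, 0) p \<le> 1" and "0 \<le> r"
    and cover: "\<And>y. y \<in> E \<Longrightarrow> bdist (0, 0) y \<le> 2 * r + 1 \<Longrightarrow> \<exists>z\<in>F. bdist y z \<le> c"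
  shows "aw_dev r E F \<le> c"
proof (rule aw_dev_least[OF \<open>0 \<le> r\<close>])
  fix x assume "x \<in> bcball r"
  then have x: "bdist (0, 0) x \<le> r" by (simp add: bcball_def)
  have near: "bsetdist x F \<le> bdist x y + c" if y: "y \<in> E" "bdist x y \<le> r + 1" for y
  proof -
    have "bdist (0, 0) y \<le> 2 * r + 1" using bdist_triangle[of "(0, 0)" y x] x y(2) by linarith
    then obtain z where z: "z \<in> F" "bdist y z \<le> c" using cover y(1) by blast
    have "bsetdist x F \<le> bdist x z" by (rule bsetdist_le_bdist[OF z(1)])
    also have "\<dots> \<le> bdist x y + bdist y z" by (rule bdist_triangle)
    finally show ?thesis using z(2) by linarith
  qed
  have xp: "bdist x p \<le> r + 1"
    using bdist_triangle[of x p "(0, 0)"] bdist_commute[of x "(0, 0)"] x p(2) by linarith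
  have "bsetdist x F - c \<le> bsetdist x E"
  proof (rule bsetdist_greatest)
    fix y assume "y \<in> E"
    then show "bsetdist x F - c \<le> bdist x y"
      using near[of y] near[OF p(1) xp] xp by (cases "bdist x y \<le> r + 1") auto
  qed (use p in auto)
  moreover have "bsetdist x E \<le> bsetdist x F" by (rule bsetdist_mono) fact+
  ultimately show "\<bar>bsetdist x E - bsetdist x F\<bar> \<le> c" by linarith
qed

lemma aw_dev_between:
  assumes "F \<subseteq> C" "C \<subseteq> A \<union> B" "A \<noteq> {}" "B \<noteq> {}" "F \<noteq> {}" "0 \<le> r"
  shows "aw_dev r C F \<le> max (aw_dev r A F) (aw_dev r B F)"
proof (rule aw_dev_least[OF \<open>0 \<le> r\<close>])
  fix x assume x: "x \<in> bcball r"
  have "min (bsetdist x A) (bsetdist x B) \<le> bsetdist x C"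
  proof (rule bsetdist_greatest)
    fix y assume "y \<in> C"
    then show "min (bsetdist x A) (bsetdist x B) \<le> bdist x y"
      using assms(2) bsetdist_le_bdist[of y A x] bsetdist_le_bdist[of y B x] by (auto simp: min_le_iff_disj)
  qed (use assms in auto)
  moreover have "bsetdist x C \<le> bsetdist x F" by (rule bsetdist_mono) fact+
  ultimately show "\<bar>bsetdist x C - bsetdist x F\<bar> \<le> max (aw_dev r A F) (aw_dev r B F)"
    using aw_dev_upper[OF assms(3,5) x] aw_dev_upper[OF assms(4,5) x] by (auto simp: min_def max_def split: if_splits)
qed

section \<open>Convex lower semicontinuous functions\<close>

lemma epi_iff: "(t, b) \<in> epi g \<longleftrightarrow> g t \<le> ereal b"
  by (simp add: epi_def)

lemma XM_epi_nonempty: "g \<in> XM \<Longrightarrow> epi g \<noteq> {}"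
proof -
  assume "g \<in> XM"
  then have "(0, real_of_ereal (g 0)) \<in> epi g"
    by (cases "g 0") (auto simp: XM_def epi_def)
  then show ?thesis by auto
qed

lemma XM_nonneg: "g \<in> XM \<Longrightarrow> 0 \<le> g t"
  and XM_convex_fun: "g \<in> XM \<Longrightarrow> convex_fun g"
  and XM_lsc: "g \<in> XM \<Longrightarrow> lsc g"
  by (auto simp: XM_def)

lemma XM_finite_real: "g \<in> XM \<Longrightarrow> g t < \<infinity> \<Longrightarrow> g t = ereal (real_of_ereal (g t))"
  by (cases "g t") (auto simp: XM_def dest: spec[of _ t])

lemma theta_l_less_iff: "theta_l g < ereal a \<longleftrightarrow> (\<exists>t\<in>dom_f g. t < a)"
  by (auto simp: theta_l_def Inf_less_iff)

lemma less_theta_r_iff: "ereal a < theta_r g \<longleftrightarrow> (\<exists>t\<in>dom_f g. a < t)"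
  by (auto simp: theta_r_def less_Sup_iff)

lemma convex_fun_le_bound:
  assumes cv: "convex_fun g" and "x < z" "z < y" and "g x \<le> ereal K" "g y \<le> ereal K"
  shows "g z \<le> ereal K"
proof -
  define a where "a = (y - z) / (y - x)"
  have a: "0 < a" "a < 1" using assms by (auto simp: a_def field_simps)
  have "a * (y - x) = y - z" using assms by (simp add: a_def)
  then have "z = a * x + (1 - a) * y" by (simp add: algebra_simps)
  then have "g z \<le> ereal a * g x + ereal (1 - a) * g y"
    using cv a unfolding convex_fun_def by blast
  also have "\<dots> \<le> ereal a * ereal K + ereal (1 - a) * ereal K"
    by (intro add_mono ereal_mult_left_mono) (use a assms in auto)
  also have "\<dots> = ereal K" by (simp add: algebra_simps)
  finally show ?thesis .
qed

lemma XM_finite_between: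
  assumes "g \<in> XM" "x \<le> z" "z \<le> y" "g x < \<infinity>" "g y < \<infinity>"
  shows "g z < \<infinity>"
proof -
  define K where "K = max (real_of_ereal (g x)) (real_of_ereal (g y))"
  have "g x \<le> ereal K" "g y \<le> ereal K"
    using XM_finite_real[OF assms(1)] assms(4,5) unfolding K_def by (metis ereal_less_eq(3) max.cobounded1 max.cobounded2)+
  then have "g z \<le> ereal K"
    using assms convex_fun_le_bound[of g x z y K] by (cases "z = x \<or> z = y") (auto simp: XM_def)
  then show ?thesis by (rule order.strict_trans1) simp
qed

lemma XM_continuous_on_between:
  assumes gX: "g \<in> XM" and "g a < \<infinity>" "g b < \<infinity>"
  shows "continuous_on {a<..<b} (\<lambda>t. real_of_ereal (g t))"
proof (rule convex_on_continuous)
  have fin: "g x = ereal (real_of_ereal (g x))" if "x \<in> {a<..<b}" for x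
    using XM_finite_real[OF gX] XM_finite_between[OF gX, of a x b] assms that by auto
  show "convex_on {a<..<b} (\<lambda>t. real_of_ereal (g t))"
  proof (rule convex_onI)
    fix t x y :: real assume t: "0 < t" "t < 1" and x: "x \<in> {a<..<b}" and y: "y \<in> {a<..<b}"
    have "0 \<le> (1 - t) * (x - a)" "0 < t * (y - a)" "0 \<le> (1 - t) * (b - x)" "0 < t * (b - y)"
      using t x y by auto
    then have z: "(1 - t) * x + t * y \<in> {a<..<b}" by (auto simp: algebra_simps)
    obtain u v w where u: "g x = ereal u" and v: "g y = ereal v" and w: "g ((1 - t) * x + t * y) = ereal w"
      using fin[OF x] fin[OF y] fin[OF z] by blast
    have "g ((1 - t) * x + (1 - (1 - t)) * y) \<le> ereal (1 - t) * g x + ereal (1 - (1 - t)) * g y"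
      by (rule XM_convex_fun[OF gX, unfolded convex_fun_def, rule_format]) (use t in auto)
    then have "w \<le> (1 - t) * u + t * v" using u v w by simp
    then show "real_of_ereal (g ((1 - t) *\<^sub>R x + t *\<^sub>R y)) \<le> (1 - t) * real_of_ereal (g x) + t * real_of_ereal (g y)"
      using u v w by simp
  qed simp
qed simp

lemma lsc_open_superlevel:
  assumes "lsc f" shows "open {t. c < f t}"
proof (rule openI)
  fix t assume "t \<in> {t. c < f t}"
  then have ct: "c < f t" by simp
  also have "f t \<le> Liminf (at t) f" using assms unfolding lsc_def ..
  finally have "c < Liminf (at t) f" .
  then have "eventually (\<lambda>y. c < f y) (at t)" by (rule less_LiminfD)
  then have "eventually (\<lambda>y. c < f y) (nhds t)" using ct by (simp add: eventually_nhds_conv_at)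
  then obtain d where "d > 0" "\<forall>y. dist y t < d \<longrightarrow> c < f y" unfolding eventually_nhds_metric by blast
  then show "\<exists>d>0. ball t d \<subseteq> {t. c < f t}" by (auto simp: dist_commute)
qed

text \<open>The sublevel sets at levels above the infimum are closed and have the finite intersection
  property on the compact interval.\<close>
lemma lsc_attains_min:
  assumes "lsc f" "p \<le> q"
  obtains s where "s \<in> {p..q}" "\<And>t. t \<in> {p..q} \<Longrightarrow> f s \<le> f t"
proof -
  define m where "m = Inf (f ` {p..q})"
  have sublevel_closed: "closed {t. f t \<le> c}" for c
    using lsc_open_superlevel[OF assms(1), of c] by (simp add: closed_def Compl_eq not_le)
  have "{p..q} \<inter> (\<Inter>c\<in>{m<..}. {t. f t \<le> c}) \<noteq> {}"
  proof (rule compact_imp_fip_image[OF compact_Icc sublevel_closed])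
    fix C assume C: "finite C" "C \<subseteq> {m<..}"
    show "{p..q} \<inter> (\<Inter>c\<in>C. {t. f t \<le> c}) \<noteq> {}"
    proof (cases "C = {}")
      case False
      then have "m < Min C" using C by auto
      then obtain t where t: "t \<in> {p..q}" "f t < Min C" unfolding m_def Inf_less_iff by auto
      then have "f t \<le> c" if "c \<in> C" for c using C(1) that by (meson Min_le less_imp_le order.trans)
      then show ?thesis using t(1) by blast
    qed (use assms(2) in auto)
  qed
  then obtain s where s: "s \<in> {p..q}" "\<And>c. m < c \<Longrightarrow> f s \<le> c" by blast
  have "f s \<le> m" by (rule dense_ge) (use s in auto)
  moreover have "m \<le> f t" if "t \<in> {p..q}" for t unfolding m_def using that by (auto intro: Inf_lower)
  ultimately show ?thesis using that s(1) by (meson order.trans)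
qed

section \<open>Stability of the relation below under small perturbations\<close>

lemma Vk_XM: "h \<in> Vk m g \<Longrightarrow> h \<in> XM"
  by (simp add: Vk_def)

lemma Vk_near_point:
  assumes "g \<in> XM" "h \<in> Vk m g" "(t, u) \<in> epi g" "\<bar>t\<bar> \<le> real m" "\<bar>u\<bar> \<le> real m"
  obtains s where "\<bar>s - t\<bar> < 1 / real m" "h s \<le> ereal (u + 1 / real m)"
proof -
  have hX: "h \<in> XM" using assms(2) by (rule Vk_XM)
  have "(t, u) \<in> bcball (real m)" using assms(4,5) by (simp add: bcball_iff)
  then have "\<bar>bsetdist (t, u) (epi h) - bsetdist (t, u) (epi g)\<bar> \<le> aw_dev (real m) (epi h) (epi g)"
    by (intro aw_dev_upper XM_epi_nonempty hX assms(1))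
  also have "\<dots> < 1 / real m" using assms(2) by (simp add: Vk_iff)
  finally have "bsetdist (t, u) (epi h) < 1 / real m" using bsetdist_eq_0[OF assms(3)] by simp
  then obtain y where y: "y \<in> epi h" "bdist (t, u) y < 1 / real m"
    using bsetdist_lessE[OF XM_epi_nonempty[OF hX]] by blast
  obtain s b where "y = (s, b)" by (cases y)
  with y have "h s \<le> ereal b" "\<bar>s - t\<bar> < 1 / real m" "b \<le> u + 1 / real m"
    by (auto simp: epi_iff bdist_Pair)
  then show ?thesis using that order.trans by fastforce
qed

lemma eventually_one_over_less: "0 < d \<Longrightarrow> eventually (\<lambda>m. 1 / real m < d) sequentially"
  using order_tendstoD(2)[OF lim_1_over_n] by (auto simp: of_nat_def)

lemma eventually_real_gt: "eventually (\<lambda>m. C < real m) sequentially"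
  using filterlim_real_sequentially unfolding filterlim_at_top_dense by blast

lemma eventually_Vk_subset_Vk:
  assumes gV: "g \<in> Vk k \<phi>" and "epi \<phi> \<noteq> {}" and "1 \<le> k"
  shows "eventually (\<lambda>m. Vk m g \<subseteq> Vk k \<phi>) sequentially"
proof -
  define s where "s = aw_dev (real k) (epi g) (epi \<phi>)"
  have gX: "g \<in> XM" and s: "s < 1 / real k" using gV by (auto simp: Vk_iff s_def)
  have "eventually (\<lambda>m. k \<le> m \<and> 1 / real m < 1 / real k - s) sequentially"
    using eventually_ge_at_top eventually_one_over_less[of "1 / real k - s"] s
    by (auto intro: eventually_conj)
  then show ?thesis
  proof (rule eventually_mono, intro subsetI)
    fix m h assume m: "k \<le> m \<and> 1 / real m < 1 / real k - s" and hV: "h \<in> Vk m g"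
    have "aw_dev (real k) (epi h) (epi \<phi>) \<le> aw_dev (real m) (epi h) (epi g) + s"
      unfolding s_def using m assms(2,3) XM_epi_nonempty[OF Vk_XM[OF hV]] XM_epi_nonempty[OF gX]
      by (intro aw_dev_triangle) auto
    also have "\<dots> < 1 / real k" using hV m by (simp add: Vk_iff)
    finally show "h \<in> Vk k \<phi>" using Vk_XM[OF hV] by (simp add: Vk_iff)
  qed
qed

lemma below_domain_margin:
  assumes gX: "g \<in> XM" and "below g \<phi>" "theta_l \<phi> = ereal \<alpha>" "theta_r \<phi> = ereal \<beta>"
  obtains t1 t2 where "t1 < \<alpha>" "\<beta> < t2" "\<And>s. s \<in> {t1..t2} \<Longrightarrow> g s < \<infinity>"
proof -
  obtain t1 t2 where t: "t1 \<in> dom_f g" "t1 < \<alpha>" "t2 \<in> dom_f g" "\<beta> < t2"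
    using assms(2-4) by (auto simp: below_def theta_l_less_iff less_theta_r_iff)
  then show ?thesis using that XM_finite_between[OF gX, of t1 _ t2] by (auto simp: dom_f_def)
qed

lemma XM_uniform_gap:
  assumes gX: "g \<in> XM" and t: "t1 < \<alpha>" "\<beta> < t2" and gfin: "\<And>s. s \<in> {t1..t2} \<Longrightarrow> g s < \<infinity>"
    and "\<alpha> \<le> \<beta>" and Pc: "continuous_on {\<alpha>..\<beta>} P"
    and gP: "\<And>\<theta>. \<theta> \<in> {\<alpha>..\<beta>} \<Longrightarrow> g \<theta> < ereal (P \<theta>)"
  obtains r \<delta> where "0 < r" "0 < \<delta>" "\<And>\<theta> s. \<theta> \<in> {\<alpha>..\<beta>} \<Longrightarrow> \<bar>s - \<theta>\<bar> \<le> r \<Longrightarrow> g s \<le> ereal (P \<theta> - \<delta>)"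
proof -
  define G where "G t = real_of_ereal (g t)" for t
  have Gg: "g s = ereal (G s)" if "s \<in> {t1..t2}" for s
    unfolding G_def using XM_finite_real[OF gX gfin[OF that]] .
  define r0 where "r0 = min (\<alpha> - t1) (t2 - \<beta>) / 2"
  have r0: "0 < r0" "r0 < \<alpha> - t1" "r0 < t2 - \<beta>" using t by (auto simp: r0_def)
  define J where "J = {\<alpha> - r0 .. \<beta> + r0}"
  have J: "J \<subseteq> {t1<..<t2}" "{\<alpha>..\<beta>} \<subseteq> J" using r0 by (auto simp: J_def)
  have GJ: "continuous_on J G" unfolding G_def
    using XM_continuous_on_between[OF gX, of t1 t2] gfin t \<open>\<alpha> \<le> \<beta>\<close> J(1)
    by (auto intro: continuous_on_subset)
  have "continuous_on {\<alpha>..\<beta>} (\<lambda>t. P t - G t)"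
    by (intro continuous_intros Pc continuous_on_subset[OF GJ J(2)])
  moreover have "{\<alpha>..\<beta>} \<noteq> {}" using \<open>\<alpha> \<le> \<beta>\<close> by simp
  ultimately obtain t0 where t0: "t0 \<in> {\<alpha>..\<beta>}" "\<forall>t\<in>{\<alpha>..\<beta>}. P t0 - G t0 \<le> P t - G t"
    using continuous_attains_inf[OF compact_Icc] by blast
  define \<delta> where "\<delta> = P t0 - G t0"
  have \<delta>: "0 < \<delta>" using gP[OF t0(1)] Gg[of t0] t0(1) t by (auto simp: \<delta>_def)
  have "uniformly_continuous_on J G" by (rule compact_uniformly_continuous[OF GJ]) (simp add: J_def)
  moreover have "0 < \<delta> / 2" using \<delta> by simp
  ultimately obtain d where d: "0 < d" "\<forall>s\<in>J. \<forall>s'\<in>J. dist s' s < d \<longrightarrow> dist (G s') (G s) < \<delta> / 2"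
    unfolding uniformly_continuous_on_def by blast
  define r where "r = min r0 d / 2"
  have r: "0 < r" "r < r0" "r < d" using r0 d by (auto simp: r_def)
  show ?thesis
  proof (rule that[OF r(1) half_gt_zero[OF \<delta>]])
    fix \<theta> s assume \<theta>: "\<theta> \<in> {\<alpha>..\<beta>}" and s: "\<bar>s - \<theta>\<bar> \<le> r"
    have "s \<in> J" "\<theta> \<in> J" using \<theta> s r by (auto simp: J_def)
    moreover have "dist s \<theta> < d" using s r by (simp add: dist_real_def)
    ultimately have "dist (G s) (G \<theta>) < \<delta> / 2" using d(2) by blast
    then have "G s < G \<theta> + \<delta> / 2" unfolding dist_real_def by linarith
    moreover have "G \<theta> \<le> P \<theta> - \<delta>" using t0(2) \<theta> unfolding \<delta>_def by fastforce
    ultimately have "G s \<le> P \<theta> - \<delta> / 2" by simp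
    then show "g s \<le> ereal (P \<theta> - \<delta> / 2)" using Gg[of s] \<open>s \<in> J\<close> J(1) by auto
  qed
qed

lemma below_if_Vk_near:
  assumes gX: "g \<in> XM" and hV: "h \<in> Vk m g"
    and thl: "theta_l \<phi> = ereal \<alpha>" and thr: "theta_r \<phi> = ereal \<beta>" and "\<alpha> \<le> \<beta>"
    and Pe: "\<And>\<theta>. \<theta> \<in> {\<alpha>..\<beta>} \<Longrightarrow> \<phi> \<theta> = ereal (P \<theta>)"
    and gap: "\<And>\<theta> s. \<theta> \<in> {\<alpha>..\<beta>} \<Longrightarrow> \<bar>s - \<theta>\<bar> \<le> r \<Longrightarrow> g s \<le> ereal (P \<theta> - \<delta>)"
    and mr: "1 / real m < r" and m\<delta>: "1 / real m < \<delta>"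
    and bounds: "\<And>\<theta>. \<theta> \<in> {\<alpha>..\<beta>} \<Longrightarrow> \<bar>\<theta>\<bar> + r \<le> real m \<and> P \<theta> \<le> real m"
  shows "below h \<phi>"
proof -
  have near: "\<exists>s. \<bar>s - t\<bar> < 1 / real m \<and> h s \<le> ereal (P \<theta> - \<delta> + 1 / real m)"
    if \<theta>: "\<theta> \<in> {\<alpha>..\<beta>}" and t: "\<bar>t - \<theta>\<bar> = r" for \<theta> t
  proof -
    have gt: "g t \<le> ereal (P \<theta> - \<delta>)" using gap[OF \<theta>] t by simp
    have "0 \<le> P \<theta> - \<delta>" using gt XM_nonneg[OF gX, of t] by (meson ereal_less_eq(5) order.trans)
    moreover have "0 \<le> 1 / real m" by simp
    ultimately have "\<bar>P \<theta> - \<delta>\<bar> \<le> real m" using bounds[OF \<theta>] m\<delta> by linarith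
    moreover have "\<bar>t\<bar> \<le> real m" using bounds[OF \<theta>] t by linarith
    ultimately obtain s where "\<bar>s - t\<bar> < 1 / real m" "h s \<le> ereal (P \<theta> - \<delta> + 1 / real m)"
      using Vk_near_point[OF gX hV, of t "P \<theta> - \<delta>"] gt by (auto simp: epi_iff)
    then show ?thesis by blast
  qed
  txt \<open>Points of epi h just above g on both sides of \<theta> lie below \<phi> \<theta>; convexity of h then
    gives h \<theta> < \<phi> \<theta>.\<close>
  have bracket: "\<exists>s1 s2. s1 < \<theta> \<and> \<theta> < s2 \<and> h s1 < \<phi> \<theta> \<and> h s2 < \<phi> \<theta> \<and> h \<theta> < \<phi> \<theta>"
    if \<theta>: "\<theta> \<in> {\<alpha>..\<beta>}" for \<theta>
  proof -
    define K where "K = P \<theta> - \<delta> + 1 / real m"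
    have K: "ereal K < \<phi> \<theta>" using Pe[OF \<theta>] m\<delta> by (simp add: K_def)
    have "0 < r" using mr order.strict_trans1[of 0 "1 / real m" r] by simp
    then obtain s1 s2 where s: "\<bar>s1 - (\<theta> - r)\<bar> < 1 / real m" "h s1 \<le> ereal K"
      "\<bar>s2 - (\<theta> + r)\<bar> < 1 / real m" "h s2 \<le> ereal K"
      using near[OF \<theta>, of "\<theta> - r"] near[OF \<theta>, of "\<theta> + r"] unfolding K_def by auto
    have "s1 < \<theta>" "\<theta> < s2" using s(1,3) mr by linarith+
    moreover have "h \<theta> \<le> ereal K"
      using convex_fun_le_bound[OF XM_convex_fun[OF Vk_XM[OF hV]]] calculation s(2,4) by blast
    ultimately show ?thesis using s(2,4) K by (meson order.strict_trans1)
  qed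
  have dom: "t \<in> dom_f h" if "h t < \<phi> \<theta>" for t \<theta>
    using that by (auto simp: dom_f_def)
  have "\<exists>t\<in>dom_f h. t < \<alpha>" "\<exists>t\<in>dom_f h. \<beta> < t"
    using bracket[of \<alpha>] bracket[of \<beta>] dom \<open>\<alpha> \<le> \<beta>\<close> by force+
  then show ?thesis using bracket by (auto simp: below_def thl thr theta_l_less_iff less_theta_r_iff)
qed

lemma eventually_Vk_subset_W:
  assumes gX: "g \<in> XM" and gb: "below g \<phi>"
    and thl: "theta_l \<phi> = ereal \<alpha>" and thr: "theta_r \<phi> = ereal \<beta>" and "\<alpha> \<le> \<beta>"
    and Pe: "\<And>\<theta>. \<theta> \<in> {\<alpha>..\<beta>} \<Longrightarrow> \<phi> \<theta> = ereal (P \<theta>)" and Pc: "continuous_on {\<alpha>..\<beta>} P"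
  shows "eventually (\<lambda>m. Vk m g \<subseteq> W \<phi>) sequentially"
proof -
  obtain t1 t2 where t: "t1 < \<alpha>" "\<beta> < t2" "\<And>s. s \<in> {t1..t2} \<Longrightarrow> g s < \<infinity>"
    using below_domain_margin[OF gX gb thl thr] by blast
  have "g \<theta> < ereal (P \<theta>)" if "\<theta> \<in> {\<alpha>..\<beta>}" for \<theta>
    using gb that Pe[OF that] by (auto simp: below_def thl thr)
  then obtain r \<delta> where r\<delta>: "0 < r" "0 < \<delta>"
    and gap: "\<And>\<theta> s. \<theta> \<in> {\<alpha>..\<beta>} \<Longrightarrow> \<bar>s - \<theta>\<bar> \<le> r \<Longrightarrow> g s \<le> ereal (P \<theta> - \<delta>)"
    using XM_uniform_gap[OF gX t \<open>\<alpha> \<le> \<beta>\<close> Pc] by metis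
  obtain C where C: "\<And>\<theta>. \<theta> \<in> {\<alpha>..\<beta>} \<Longrightarrow> P \<theta> \<le> C"
    using compact_attains_sup[OF compact_continuous_image[OF Pc compact_Icc]] \<open>\<alpha> \<le> \<beta>\<close> by fastforce
  have "eventually (\<lambda>m. 1 / real m < r \<and> 1 / real m < \<delta> \<and> \<bar>\<alpha>\<bar> + \<bar>\<beta>\<bar> + r < real m \<and> C < real m) sequentially"
    using r\<delta> by (intro eventually_conj eventually_one_over_less eventually_real_gt)
  then show ?thesis
  proof (rule eventually_mono, intro subsetI)
    fix m h assume m: "1 / real m < r \<and> 1 / real m < \<delta> \<and> \<bar>\<alpha>\<bar> + \<bar>\<beta>\<bar> + r < real m \<and> C < real m"
      and hV: "h \<in> Vk m g"
    have "below h \<phi>"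
    proof (rule below_if_Vk_near[OF gX hV thl thr \<open>\<alpha> \<le> \<beta>\<close> Pe gap])
      fix \<theta> assume "\<theta> \<in> {\<alpha>..\<beta>}"
      then show "\<bar>\<theta>\<bar> + r \<le> real m \<and> P \<theta> \<le> real m" using m C by fastforce
    qed (use m in auto)
    then show "h \<in> W \<phi>" using Vk_XM[OF hV] by (simp add: W_def)
  qed
qed

lemma aw_open_Vk_Int_W:
  assumes "1 \<le> k" and "epi \<phi> \<noteq> {}"
    and "theta_l \<phi> = ereal \<alpha>" and "theta_r \<phi> = ereal \<beta>" and "\<alpha> \<le> \<beta>"
    and "\<And>\<theta>. \<theta> \<in> {\<alpha>..\<beta>} \<Longrightarrow> \<phi> \<theta> = ereal (P \<theta>)" and "continuous_on {\<alpha>..\<beta>} P"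
  shows "aw_open (Vk k \<phi> \<inter> W \<phi>)"
  unfolding aw_open_def
proof (intro conjI ballI)
  show "Vk k \<phi> \<inter> W \<phi> \<subseteq> XM" by (auto simp: Vk_def)
  fix g assume g: "g \<in> Vk k \<phi> \<inter> W \<phi>"
  then have "eventually (\<lambda>m. 1 \<le> m \<and> Vk m g \<subseteq> Vk k \<phi> \<and> Vk m g \<subseteq> W \<phi>) sequentially"
    using assms by (intro eventually_conj eventually_ge_at_top eventually_Vk_subset_Vk eventually_Vk_subset_W)
      (auto simp: W_def)
  then show "\<exists>m\<ge>1. Vk m g \<subseteq> Vk k \<phi> \<inter> W \<phi>"
    by (auto dest: eventually_happens)
qed

section \<open>Convex combinations\<close>

lemma ereal_convex_comb_eq_infinity:
  "0 < a \<Longrightarrow> a < 1 \<Longrightarrow> 0 \<le> (x::ereal) \<Longrightarrow> 0 \<le> y \<Longrightarrow>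
   ereal a * x + ereal (1 - a) * y = \<infinity> \<longleftrightarrow> x = \<infinity> \<or> y = \<infinity>"
  by (cases x; cases y) auto

lemma ereal_convex_comb_swap:
  fixes x1 x2 y1 y2 :: ereal
  assumes "0 < a" "a < 1" "0 < l" "l < 1" "0 \<le> x1" "0 \<le> x2" "0 \<le> y1" "0 \<le> y2"
  shows "ereal a * (ereal l * x1 + ereal (1 - l) * x2) + ereal (1 - a) * (ereal l * y1 + ereal (1 - l) * y2) =
    ereal l * (ereal a * x1 + ereal (1 - a) * y1) + ereal (1 - l) * (ereal a * x2 + ereal (1 - a) * y2)"
  using assms by (cases x1; cases x2; cases y1; cases y2) (auto simp: algebra_simps)

lemma min_le_ereal_convex_comb:
  "0 \<le> a \<Longrightarrow> a \<le> 1 \<Longrightarrow> 0 \<le> (x::ereal) \<Longrightarrow> 0 \<le> y \<Longrightarrow> min x y \<le> ereal a * x + ereal (1 - a) * y"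
proof (cases x; cases y)
  fix u v assume a: "0 \<le> a" "a \<le> 1" and x: "x = ereal u" and y: "y = ereal v"
  have "a * min u v \<le> a * u" "(1 - a) * min u v \<le> (1 - a) * v"
    using a by (intro mult_left_mono; simp)+
  moreover have "min u v = a * min u v + (1 - a) * min u v" by (simp add: algebra_simps)
  ultimately have "min u v \<le> a * u + (1 - a) * v" by linarith
  then show ?thesis using x y by (simp add: min_def split: if_splits)
qed auto

lemma convex_fun_convex_comb:
  assumes gX: "g \<in> XM" and hX: "h \<in> XM" and a: "0 < a" "a < 1"
  shows "convex_fun (\<lambda>\<theta>. ereal a * g \<theta> + ereal (1 - a) * h \<theta>)"
  unfolding convex_fun_def
proof (intro allI impI)
  fix x y l :: real assume l: "0 < l \<and> l < 1"
  let ?z = "l * x + (1 - l) * y"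
  have "ereal a * g ?z + ereal (1 - a) * h ?z \<le>
      ereal a * (ereal l * g x + ereal (1 - l) * g y) + ereal (1 - a) * (ereal l * h x + ereal (1 - l) * h y)"
    using l a XM_convex_fun[OF gX] XM_convex_fun[OF hX]
    by (intro add_mono ereal_mult_left_mono) (auto simp: convex_fun_def)
  also have "\<dots> = ereal l * (ereal a * g x + ereal (1 - a) * h x) + ereal (1 - l) * (ereal a * g y + ereal (1 - a) * h y)"
    using l a XM_nonneg[OF gX] XM_nonneg[OF hX] by (intro ereal_convex_comb_swap) auto
  finally show "ereal a * g ?z + ereal (1 - a) * h ?z \<le> \<dots>" .
qed

lemma lsc_convex_comb:
  assumes gX: "g \<in> XM" and hX: "h \<in> XM" and a: "0 < a" "a < 1"
  shows "lsc (\<lambda>\<theta>. ereal a * g \<theta> + ereal (1 - a) * h \<theta>)"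
  unfolding lsc_def
proof
  fix x
  have nb: "at x \<noteq> (bot :: real filter)" by simp
  have "ereal a * g x + ereal (1 - a) * h x \<le> ereal a * Liminf (at x) g + ereal (1 - a) * Liminf (at x) h"
    using XM_lsc[OF gX] XM_lsc[OF hX] a unfolding lsc_def by (intro add_mono ereal_mult_left_mono) auto
  also have "\<dots> = Liminf (at x) (\<lambda>t. ereal a * g t) + Liminf (at x) (\<lambda>t. ereal (1 - a) * h t)"
    using Liminf_ereal_mult_left[OF nb, of a g] Liminf_ereal_mult_left[OF nb, of "1 - a" h] a by simp
  also have "\<dots> \<le> Liminf (at x) (\<lambda>t. ereal a * g t + ereal (1 - a) * h t)"
    by (rule Liminf_add_le[OF nb]) (use a XM_nonneg[OF gX] XM_nonneg[OF hX] in auto)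
  finally show "ereal a * g x + ereal (1 - a) * h x \<le> Liminf (at x) (\<lambda>t. ereal a * g t + ereal (1 - a) * h t)" .
qed

lemma XM_convex_comb:
  assumes gX: "g \<in> XM" and hX: "h \<in> XM" and a: "0 < a" "a < 1"
  shows "(\<lambda>\<theta>. ereal a * g \<theta> + ereal (1 - a) * h \<theta>) \<in> XM"
proof -
  have "g 0 < \<infinity>" "h 0 < \<infinity>" using gX hX by (auto simp: XM_def)
  then have "ereal a * g 0 + ereal (1 - a) * h 0 < \<infinity>"
    using ereal_convex_comb_eq_infinity[OF a XM_nonneg[OF gX] XM_nonneg[OF hX]] by (auto simp: less_le)
  then show ?thesis using a XM_nonneg[OF gX] XM_nonneg[OF hX] convex_fun_convex_comb[OF assms] lsc_convex_comb[OF assms]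
    by (auto simp: XM_def)
qed

lemma ereal_convex_comb_less:
  fixes x y z :: ereal
  assumes "0 < a" "a < 1" "0 \<le> x" "0 \<le> y" "x < z" "y < z"
  shows "ereal a * x + ereal (1 - a) * y < z"
proof (cases z)
  case (real w)
  then obtain u v where uv: "x = ereal u" "y = ereal v" "u < w" "v < w"
    using assms by (cases x; cases y) auto
  then have "a * u + (1 - a) * v < a * w + (1 - a) * w"
    using assms(1,2) by (intro add_strict_mono mult_strict_left_mono) auto
  then show ?thesis using uv real by (simp add: algebra_simps)
qed (use assms in \<open>auto simp: ereal_convex_comb_eq_infinity less_le\<close>)

lemma below_convex_comb:
  assumes gX: "g \<in> XM" and hX: "h \<in> XM" and a: "0 < a" "a < 1"
    and gb: "below g \<phi>" and hb: "below h \<phi>"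
    and thl: "theta_l \<phi> = ereal \<alpha>" and thr: "theta_r \<phi> = ereal \<beta>" and "\<alpha> \<le> \<beta>"
  shows "below (\<lambda>\<theta>. ereal a * g \<theta> + ereal (1 - a) * h \<theta>) \<phi>"
proof -
  let ?c = "\<lambda>\<theta>. ereal a * g \<theta> + ereal (1 - a) * h \<theta>"
  obtain t1 t2 where t: "t1 < \<alpha>" "\<beta> < t2" "\<And>s. s \<in> {t1..t2} \<Longrightarrow> g s < \<infinity>"
    using below_domain_margin[OF gX gb thl thr] by blast
  obtain t1' t2' where t': "t1' < \<alpha>" "\<beta> < t2'" "\<And>s. s \<in> {t1'..t2'} \<Longrightarrow> h s < \<infinity>"
    using below_domain_margin[OF hX hb thl thr] by blast
  have fin: "?c s < \<infinity>" if "s \<in> {max t1 t1'..min t2 t2'}" for s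
    using t(3)[of s] t'(3)[of s] that ereal_convex_comb_eq_infinity[OF a XM_nonneg[OF gX] XM_nonneg[OF hX]]
    by (auto simp: less_le)
  have "max t1 t1' \<le> min t2 t2'" using t t' \<open>\<alpha> \<le> \<beta>\<close> by auto
  then have "max t1 t1' \<in> dom_f ?c" "min t2 t2' \<in> dom_f ?c"
    using fin by (auto simp: dom_f_def)
  then have "\<exists>s\<in>dom_f ?c. s < \<alpha>" "\<exists>s\<in>dom_f ?c. \<beta> < s"
    using t t' by (intro bexI[of _ "max t1 t1'"] bexI[of _ "min t2 t2'"]; simp)+
  moreover have "?c \<theta> < \<phi> \<theta>" if "\<alpha> \<le> \<theta>" "\<theta> \<le> \<beta>" for \<theta>
  proof (rule ereal_convex_comb_less[OF a XM_nonneg[OF gX] XM_nonneg[OF hX]])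
    show "g \<theta> < \<phi> \<theta>" "h \<theta> < \<phi> \<theta>" using gb hb that by (simp_all add: below_def thl thr)
  qed
  ultimately show ?thesis unfolding below_def thl thr theta_l_less_iff less_theta_r_iff by simp
qed

lemma convex_comb_in_Vk_Int_W:
  assumes thl: "theta_l \<phi> = ereal \<alpha>" and thr: "theta_r \<phi> = ereal \<beta>" and "\<alpha> \<le> \<beta>"
    and dom: "dom_f \<phi> \<subseteq> {\<alpha>..\<beta>}" and ne: "epi \<phi> \<noteq> {}"
    and g: "g \<in> Vk k \<phi> \<inter> W \<phi>" and h: "h \<in> Vk k \<phi> \<inter> W \<phi>" and a: "a \<in> {0..1}"
  shows "(\<lambda>\<theta>. ereal a * g \<theta> + ereal (1 - a) * h \<theta>) \<in> Vk k \<phi> \<inter> W \<phi>"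
proof -
  consider "a = 0" | "a = 1" | "0 < a \<and> a < 1" using a by fastforce
  then show ?thesis
  proof cases
    case 3
    then have a: "0 < a" "a < 1" by auto
    let ?c = "\<lambda>\<theta>. ereal a * g \<theta> + ereal (1 - a) * h \<theta>"
    have gX: "g \<in> XM" and hX: "h \<in> XM" and gb: "below g \<phi>" and hb: "below h \<phi>"
      using g h by (auto simp: W_def)
    have cX: "?c \<in> XM" by (rule XM_convex_comb[OF gX hX a])
    have cb: "below ?c \<phi>" by (rule below_convex_comb[OF gX hX a gb hb thl thr \<open>\<alpha> \<le> \<beta>\<close>])
    have "epi \<phi> \<subseteq> epi ?c"
    proof (clarsimp simp: epi_iff)
      fix \<theta> b assume b: "\<phi> \<theta> \<le> ereal b"
      then have "\<phi> \<theta> < \<infinity>" by (rule order.strict_trans1) simp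
      then have "\<theta> \<in> {\<alpha>..\<beta>}" using dom by (auto simp: dom_f_def)
      then have "?c \<theta> < \<phi> \<theta>" using cb by (auto simp: below_def thl thr)
      then show "?c \<theta> \<le> ereal b" using b by simp
    qed
    moreover have "epi ?c \<subseteq> epi g \<union> epi h"
    proof (clarsimp simp: epi_iff)
      fix \<theta> b assume "?c \<theta> \<le> ereal b"
      moreover have "min (g \<theta>) (h \<theta>) \<le> ?c \<theta>"
        using a XM_nonneg[OF gX] XM_nonneg[OF hX] by (intro min_le_ereal_convex_comb) auto
      ultimately show "\<not> h \<theta> \<le> ereal b \<Longrightarrow> g \<theta> \<le> ereal b" by (auto simp: min_le_iff_disj)
    qed
    ultimately have "aw_dev (real k) (epi ?c) (epi \<phi>) \<le> max (aw_dev (real k) (epi g) (epi \<phi>)) (aw_dev (real k) (epi h) (epi \<phi>))"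
      using ne XM_epi_nonempty[OF gX] XM_epi_nonempty[OF hX] by (intro aw_dev_between) auto
    also have "\<dots> < 1 / real k" using g h by (simp add: Vk_iff)
    finally show ?thesis using cX cb by (simp add: Vk_iff W_def)
  qed (use g h in \<open>auto simp: zero_ereal_def[symmetric]\<close>)
qed

section \<open>The sets A_k(f)\<close>

locale fsharp_data =
  fixes f :: "real \<Rightarrow> ereal" and k :: nat and \<epsilon> :: real
  assumes fX: "f \<in> XM" and f0: "f 0 = 1" and k1: "1 \<le> k" and ok: "eps_ok f k \<epsilon>"
begin

abbreviation "L \<equiv> eta_l f k"
abbreviation "R \<equiv> eta_r f k"
abbreviation "e \<equiv> 1 / (2 * real k)"
abbreviation "\<phi> \<equiv> fsharp f k \<epsilon>"
abbreviation "F t \<equiv> real_of_ereal (f t)"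

lemma e_pos: "0 < e"
  using k1 by simp

lemma eps_bounds: "L < L + \<epsilon>" "L + \<epsilon> < R - \<epsilon>" "R - \<epsilon> < R"
  using ok by (auto simp: eps_ok_def)

lemma left_end_close:
  "a \<in> {L..L+\<epsilon>} \<Longrightarrow> b \<in> {L..L+\<epsilon>} \<Longrightarrow> f a < \<infinity> \<and> \<bar>a - b\<bar> < e \<and> \<bar>F a - F b\<bar> < e"
  using ok unfolding eps_ok_def bdist_Pair by auto

lemma right_end_close:
  "a \<in> {R-\<epsilon>..R} \<Longrightarrow> b \<in> {R-\<epsilon>..R} \<Longrightarrow> f a < \<infinity> \<and> \<bar>a - b\<bar> < e \<and> \<bar>F a - F b\<bar> < e"
  using ok unfolding eps_ok_def bdist_Pair by auto

lemma eps_less_e: "\<epsilon> < e"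
  using left_end_close[of L "L + \<epsilon>"] eps_bounds by auto

lemma f_finite: "t \<in> {L..R} \<Longrightarrow> f t < \<infinity>"
  using XM_finite_between[OF fX, of L t R] left_end_close[of L L] right_end_close[of R R] eps_bounds
  by auto

lemma f_real: "t \<in> {L..R} \<Longrightarrow> f t = ereal (F t)"
  using XM_finite_real[OF fX f_finite] .

lemma graph_pts_bounds: "\<theta> \<in> graph_pts f k \<Longrightarrow> L \<le> \<theta> \<and> \<theta> \<le> R"
proof -
  assume \<theta>: "\<theta> \<in> graph_pts f k"
  have bnd: "\<bar>t\<bar> \<le> 2 * real k + 2" if "t \<in> graph_pts f k" for t
    using that by (auto simp: graph_pts_def bball_def bdist_def)
  have "bdd_below (graph_pts f k)" "bdd_above (graph_pts f k)"
    using bnd by (fastforce intro: bdd_belowI[of _ "- (2 * real k + 2)"] bdd_aboveI[of _ "2 * real k + 2"])+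
  then show ?thesis unfolding eta_l_def eta_r_def using cInf_lower[OF \<theta>] cSup_upper[OF \<theta>] by auto
qed

lemma fsharp_eq:
  assumes "t \<in> {L+\<epsilon>..R-\<epsilon>}" shows "\<phi> t = ereal (F t + e)"
proof -
  obtain r where "f t = ereal r" using f_real[of t] assms eps_bounds by auto
  then show ?thesis using assms by (simp add: fsharp_def)
qed

lemma dom_fsharp: "dom_f \<phi> = {L+\<epsilon>..R-\<epsilon>}"
  using fsharp_eq by (auto simp: dom_f_def fsharp_def)

lemma theta_l_fsharp: "theta_l \<phi> = ereal (L + \<epsilon>)"
  unfolding theta_l_def dom_fsharp using eps_bounds
  by (intro antisym Inf_lower Inf_greatest) auto

lemma theta_r_fsharp: "theta_r \<phi> = ereal (R - \<epsilon>)"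
  unfolding theta_r_def dom_fsharp using eps_bounds
  by (intro antisym Sup_upper Sup_least) auto

lemma f_less_fsharp:
  assumes "t \<in> {L+\<epsilon>..R-\<epsilon>}" shows "f t < \<phi> t"
proof -
  obtain r where "f t = ereal r" using f_real[of t] assms eps_bounds by auto
  then show ?thesis using fsharp_eq[OF assms] e_pos by simp
qed

lemma epi_fsharp_subset: "epi \<phi> \<subseteq> epi f"
proof (clarsimp simp: epi_iff)
  fix t b assume "\<phi> t \<le> ereal b"
  moreover have "f t \<le> \<phi> t"
    using f_less_fsharp[of t] by (cases "t \<in> {L+\<epsilon>..R-\<epsilon>}") (auto simp: fsharp_def)
  ultimately show "f t \<le> ereal b" by simp
qed

lemma epi_fsharp_nonempty: "epi \<phi> \<noteq> {}"
proof -
  have "(L + \<epsilon>, F (L + \<epsilon>) + e) \<in> epi \<phi>"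
    using fsharp_eq[of "L + \<epsilon>"] eps_bounds by (simp add: epi_iff)
  then show ?thesis by blast
qed

lemma f_below_fsharp: "below f \<phi>"
proof -
  have "L \<in> dom_f f" "R \<in> dom_f f" using f_finite eps_bounds by (auto simp: dom_f_def)
  then have "\<exists>t\<in>dom_f f. t < L + \<epsilon>" "\<exists>t\<in>dom_f f. R - \<epsilon> < t" using eps_bounds by blast+
  then show ?thesis using f_less_fsharp
    unfolding below_def theta_l_fsharp theta_r_fsharp theta_l_less_iff less_theta_r_iff by simp
qed

lemma continuous_on_fsharp: "continuous_on {L+\<epsilon>..R-\<epsilon>} (\<lambda>t. F t + e)"
proof -
  have "continuous_on {L<..<R} F"
    using XM_continuous_on_between[OF fX] f_finite eps_bounds by simp
  then have "continuous_on {L+\<epsilon>..R-\<epsilon>} F" by (rule continuous_on_subset) (use eps_bounds in auto)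
  then show ?thesis by (intro continuous_intros)
qed

lemma epi_f_near_epi_fsharp:
  assumes y: "(\<theta>, b) \<in> epi f" and yb: "bdist (0, 0) (\<theta>, b) \<le> 2 * real k + 1"
    and sl: "sl \<in> {L..L+\<epsilon>}" "\<And>t. t \<in> {L..L+\<epsilon>} \<Longrightarrow> f sl \<le> f t"
    and sr: "sr \<in> {R-\<epsilon>..R}" "\<And>t. t \<in> {R-\<epsilon>..R} \<Longrightarrow> f sr \<le> f t"
  shows "\<exists>z\<in>epi \<phi>. bdist (\<theta>, b) z \<le> e + max 0 (max (F (L+\<epsilon>) - F sl) (F (R-\<epsilon>) - F sr))"
proof -
  have fb: "f \<theta> \<le> ereal b" using y by (simp add: epi_iff)
  then obtain r where r: "f \<theta> = ereal r" "r \<le> b"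
    using XM_nonneg[OF fX, of \<theta>] by (cases "f \<theta>") auto
  have "\<theta> \<in> graph_pts f k"
    using yb r XM_nonneg[OF fX, of \<theta>] by (auto simp: graph_pts_def bball_def bdist_Pair)
  then have \<theta>: "L \<le> \<theta>" "\<theta> \<le> R" using graph_pts_bounds by auto
  have lift: "(t, max b (F t) + e) \<in> epi \<phi>" if "t \<in> {L+\<epsilon>..R-\<epsilon>}" for t
    using fsharp_eq[OF that] by (simp add: epi_iff)
  consider "\<theta> \<in> {L+\<epsilon>..R-\<epsilon>}" | "\<theta> < L + \<epsilon>" | "R - \<epsilon> < \<theta>" by fastforce
  then show ?thesis
  proof cases
    case 1
    have "(\<theta>, b + e) \<in> epi \<phi>" using fsharp_eq[OF 1] r by (simp add: epi_iff)
    then show ?thesis using e_pos by (force simp: bdist_Pair)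
  next
    case 2
    have "ereal (F sl) \<le> ereal r" using sl \<theta> 2 r f_real[of sl] eps_bounds by (metis atLeastAtMost_iff less_eq_real_def order.trans)
    then have "bdist (\<theta>, b) (L+\<epsilon>, max b (F (L+\<epsilon>)) + e) \<le> e + max 0 (max (F (L+\<epsilon>) - F sl) (F (R-\<epsilon>) - F sr))"
      using r 2 \<theta> eps_less_e e_pos by (auto simp: bdist_Pair max_def)
    then show ?thesis using lift[of "L + \<epsilon>"] eps_bounds by force
  next
    case 3
    have "ereal (F sr) \<le> ereal r" using sr \<theta> 3 r f_real[of sr] eps_bounds by (metis atLeastAtMost_iff less_eq_real_def order.trans)
    then have "bdist (\<theta>, b) (R-\<epsilon>, max b (F (R-\<epsilon>)) + e) \<le> e + max 0 (max (F (L+\<epsilon>) - F sl) (F (R-\<epsilon>) - F sr))"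
      using r 3 \<theta> eps_less_e e_pos by (auto simp: bdist_Pair max_def)
    then show ?thesis using lift[of "R - \<epsilon>"] eps_bounds by force
  qed
qed

lemma aw_dev_f_fsharp_less: "aw_dev (real k) (epi f) (epi \<phi>) < 1 / real k"
proof -
  obtain sl where sl: "sl \<in> {L..L+\<epsilon>}" "\<And>t. t \<in> {L..L+\<epsilon>} \<Longrightarrow> f sl \<le> f t"
    using lsc_attains_min[OF XM_lsc[OF fX], of L "L + \<epsilon>"] eps_bounds by auto
  obtain sr where sr: "sr \<in> {R-\<epsilon>..R}" "\<And>t. t \<in> {R-\<epsilon>..R} \<Longrightarrow> f sr \<le> f t"
    using lsc_attains_min[OF XM_lsc[OF fX], of "R - \<epsilon>" R] eps_bounds by auto
  define c where "c = e + max 0 (max (F (L+\<epsilon>) - F sl) (F (R-\<epsilon>) - F sr))"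
  have "\<bar>F (L+\<epsilon>) - F sl\<bar> < e" "\<bar>F (R-\<epsilon>) - F sr\<bar> < e"
    using left_end_close[of "L + \<epsilon>" sl] right_end_close[of "R - \<epsilon>" sr] sl sr eps_bounds by auto
  moreover have "e + e = 1 / real k" by simp
  ultimately have "c < 1 / real k" unfolding c_def using e_pos
    by (simp only: max_less_iff_conj abs_less_iff) linarith
  moreover have "aw_dev (real k) (epi f) (epi \<phi>) \<le> c"
  proof (rule aw_dev_le_of_cover[OF epi_fsharp_subset epi_fsharp_nonempty])
    show "(0, 1) \<in> epi f" "bdist (0, 0) (0, 1) \<le> 1" using f0 by (auto simp: epi_iff bdist_Pair)
    show "\<exists>z\<in>epi \<phi>. bdist y z \<le> c" if "y \<in> epi f" "bdist (0, 0) y \<le> 2 * real k + 1" for y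
      using epi_f_near_epi_fsharp[of "fst y" "snd y", OF _ _ sl sr] that unfolding c_def by auto
  qed simp
  ultimately show ?thesis by linarith
qed

lemma f_in_Ak: "f \<in> Ak k \<epsilon> f"
  using fX aw_dev_f_fsharp_less f_below_fsharp by (simp add: Ak_def Vk_iff W_def)

lemma aw_open_Ak: "aw_open (Ak k \<epsilon> f)"
  unfolding Ak_def
  using eps_bounds continuous_on_fsharp fsharp_eq
  by (intro aw_open_Vk_Int_W[OF k1 epi_fsharp_nonempty theta_l_fsharp theta_r_fsharp]) auto

lemma Ak_convex:
  "g \<in> Ak k \<epsilon> f \<Longrightarrow> h \<in> Ak k \<epsilon> f \<Longrightarrow> a \<in> {0..1} \<Longrightarrow>
    (\<lambda>\<theta>. ereal a * g \<theta> + ereal (1 - a) * h \<theta>) \<in> Ak k \<epsilon> f"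
  unfolding Ak_def using eps_bounds dom_fsharp
  by (intro convex_comb_in_Vk_Int_W[OF theta_l_fsharp theta_r_fsharp _ _ epi_fsharp_nonempty]) auto

lemma Ak_subset_Vk_half:
  assumes "k = 2 * j"
  shows "Ak k \<epsilon> f \<subseteq> Vk j f"
proof
  fix g assume "g \<in> Ak k \<epsilon> f"
  then have gX: "g \<in> XM" and g: "aw_dev (real k) (epi g) (epi \<phi>) < 1 / real k"
    by (auto simp: Ak_def Vk_iff)
  have "aw_dev (real j) (epi g) (epi f) \<le> aw_dev (real k) (epi g) (epi \<phi>) + aw_dev (real k) (epi \<phi>) (epi f)"
    using assms XM_epi_nonempty[OF gX] XM_epi_nonempty[OF fX] epi_fsharp_nonempty
    by (intro aw_dev_triangle) auto
  also have "\<dots> < 1 / real k + 1 / real k"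
    using g aw_dev_f_fsharp_less by (simp add: aw_dev_commute)
  also have "\<dots> = 1 / real j" using assms k1 by simp
  finally show "g \<in> Vk j f" using gX by (simp add: Vk_iff)
qed

end

text \<open>The hypothesis dom_f f \<noteq> {0} only serves in the paper to make an admissible \<epsilon> exist;
  here admissibility is assumed directly.\<close>
theorem mainTheorem6:
  fixes f :: "real \<Rightarrow> ereal" and eps :: "nat \<Rightarrow> real"
  assumes "f \<in> XM" and "f 0 = 1" and "dom_f f \<noteq> {0}"
    and "\<And>k. k \<ge> 1 \<Longrightarrow> eps_ok f k (eps k)"
  shows "(\<forall>k\<ge>1. aw_open (Ak k (eps k) f) \<and> f \<in> Ak k (eps k) f \<and>
            (\<forall>g\<in>Ak k (eps k) f. \<forall>h\<in>Ak k (eps k) f. \<forall>a\<in>{0..1::real}.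
               (\<lambda>\<theta>. ereal a * g \<theta> + ereal (1 - a) * h \<theta>) \<in> Ak k (eps k) f))
       \<and> (\<forall>U. aw_open U \<and> f \<in> U \<longrightarrow> (\<exists>k\<ge>1. Ak k (eps k) f \<subseteq> U))
       \<and> (\<forall>k\<ge>1. Ak (2 * k) (eps (2 * k)) f \<subseteq> Vk k f)"
proof -
  have data: "fsharp_data f k (eps k)" if "1 \<le> k" for k
    using assms that unfolding fsharp_data_def by blast
  have half: "Ak (2 * k) (eps (2 * k)) f \<subseteq> Vk k f" if "1 \<le> k" for k
    using fsharp_data.Ak_subset_Vk_half[OF data[of "2 * k"], of k] that by simp
  have base: "\<exists>k\<ge>1. Ak k (eps k) f \<subseteq> U" if U: "aw_open U" "f \<in> U" for U
  proof -
    obtain j where "1 \<le> j" "Vk j f \<subseteq> U" using U unfolding aw_open_def by blast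
    then show ?thesis using half[of j] by (intro exI[of _ "2 * j"]) auto
  qed
  have "aw_open (Ak k (eps k) f) \<and> f \<in> Ak k (eps k) f \<and>
      (\<forall>g\<in>Ak k (eps k) f. \<forall>h\<in>Ak k (eps k) f. \<forall>a\<in>{0..1::real}.
        (\<lambda>\<theta>. ereal a * g \<theta> + ereal (1 - a) * h \<theta>) \<in> Ak k (eps k) f)" if k: "1 \<le> k" for k
    using fsharp_data.aw_open_Ak[OF data[OF k]] fsharp_data.f_in_Ak[OF data[OF k]]
      fsharp_data.Ak_convex[OF data[OF k]] by blast
  then show ?thesis using half base by blast
qed

end
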